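(* Let $n\ge1$ and let $(\eta,\xi)$ be an $n$-Lie-isoclinism from $\mathfrak g_1$ to $\mathfrak g_2$, and define $\mathcal K$, $Z_{\mathfrak g_1}$, $Z_{\mathfrak g_2}$ as in the context. Assume $[\mathcal Z_{n-1}^{\mathsf{Lie}}(\mathfrak g_i),\mathfrak g_i]_{\mathsf{Lie}}\subseteq\gamma_{n+1}^{\mathsf{Lie}}(\mathfrak g_i)$ for $i=1,2$. Then for $\{i,j\}=\{1,2\}$, $$\mathcal K/Z_{\mathfrak g_j}\ \sim_n\ \mathcal K/Z_{\mathfrak g_i}\oplus\mathcal K/\gamma_{n+1}^{\mathsf{Lie}}(\mathcal K).$$
   Context: All Leibniz algebras are over a field $\mathbb{K}$ with $\frac12\in\mathbb{K}$. A Leibniz algebra is a vector space $\mathfrak g$ with a bilinear bracket $[-,-]$ satisfying $[x,[y,z]]=[[x,y],z]-[[x,z],y]$. For $x,y\in\mathfrak g$ put $[x,y]_{lie}=[x,y]+[y,x]$. For two-sided ideals $\mathfrak m,\mathfrak n$ of $\mathfrak g$, $[\mathfrak m,\mathfrak n]_{\mathsf{Lie}}$ denotes the two-sided ideal of $\mathfrak g$ generated by $\{[m,x]_{lie}: m\in\mathfrak m, x\in\mathfrak n\}$. Lower Lie-central series: $\gamma_1^{\mathsf{Lie}}(\mathfrak g)=\mathfrak g$, $\gamma_i^{\mathsf{Lie}}(\mathfrak g)=[\gamma_{i-1}^{\mathsf{Lie}}(\mathfrak g),\mathfrak g]_{\mathsf{Lie}}$ for $i\ge2$. Upper Lie-central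 series: $\mathcal Z_0^{\mathsf{Lie}}(\mathfrak g)=0$, $\mathcal Z_i^{\mathsf{Lie}}(\mathfrak g)=\{x\in\mathfrak g:[x,y]_{lie}\in\mathcal Z_{i-1}^{\mathsf{Lie}}(\mathfrak g)\ \text{for all } y\in\mathfrak g\}$ for $i\ge1$. For $n\ge0$, Leibniz algebras $\mathfrak g_1,\mathfrak g_2$ are $n$-Lie-isoclinic, written $\mathfrak g_1\sim_n\mathfrak g_2$, if there exist Leibniz algebra isomorphisms $\eta:\mathfrak g_1/\mathcal Z_n^{\mathsf{Lie}}(\mathfrak g_1)\to\mathfrak g_2/\mathcal Z_n^{\mathsf{Lie}}(\mathfrak g_2)$ and $\xi:\gamma_{n+1}^{\mathsf{Lie}}(\mathfrak g_1)\to\gamma_{n+1}^{\mathsf{Lie}}(\mathfrak g_2)$ such that $\xi([\cdots[[x_1,x_2]_{lie},x_3]_{lie},\ldots,x_{n+1}]_{lie})=[\cdots[[y_1,y_2]_{lie},y_3]_{lie},\ldots,y_{n+1}]_{lie}$ whenever $x_i\in\mathfrak g_1$, $y_i\in\mathfrak g_2$ satisfy $\eta(x_i+\mathcal Z_n^{\mathsf{Lie}}(\mathfrak g_1))=y_i+\mathcal Z_n^{\mathsf{Lie}}(\mathfrak g_2)$ for $i=1,\ldots,n+1$; $(\eta,\xi)$ is then called an $n$-Lie-isoclinism from $\mathfrak g_1$ to $\mathfrak g_2$. Given such $(\eta,\xi)$: $\mathcal K=\{(g,h)\in\mathfrak g_1\oplus\mathfrak g_2:\eta(g+\mathcal Z_n^{\mathsf{Lie}}(\mathfrak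 g_1))=h+\mathcal Z_n^{\mathsf{Lie}}(\mathfrak g_2)\}$ (a subalgebra of $\mathfrak g_1\oplus\mathfrak g_2$), $Z_{\mathfrak g_1}=\{(g,0):g\in\mathcal Z_n^{\mathsf{Lie}}(\mathfrak g_1)\}$ and $Z_{\mathfrak g_2}=\{(0,h):h\in\mathcal Z_n^{\mathsf{Lie}}(\mathfrak g_2)\}$ (two-sided ideals of $\mathcal K$). *)

theory Defs
  imports Main
begin

record ('k, 'a) leib =
  lcarrier :: "'a set"
  ladd :: "'a \<Rightarrow> 'a \<Rightarrow> 'a"
  lzero :: "'a"
  lsmult :: "'k \<Rightarrow> 'a \<Rightarrow> 'a"
  lbr :: "'a \<Rightarrow> 'a \<Rightarrow> 'a"

definition lsub :: "('k::field, 'a) leib \<Rightarrow> 'a \<Rightarrow> 'a \<Rightarrow> 'a" where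
  "lsub L x y = ladd L x (lsmult L (-1) y)"

definition vecspace :: "('k::field, 'a) leib \<Rightarrow> bool" where
  "vecspace L \<longleftrightarrow>
     lzero L \<in> lcarrier L \<and>
     (\<forall>x\<in>lcarrier L. \<forall>y\<in>lcarrier L. ladd L x y \<in> lcarrier L) \<and>
     (\<forall>c. \<forall>x\<in>lcarrier L. lsmult L c x \<in> lcarrier L) \<and>
     (\<forall>x\<in>lcarrier L. \<forall>y\<in>lcarrier L. \<forall>z\<in>lcarrier L.
        ladd L (ladd L x y) z = ladd L x (ladd L y z)) \<and>
     (\<forall>x\<in>lcarrier L. \<forall>y\<in>lcarrier L. ladd L x y = ladd L y x) \<and>
     (\<forall>x\<in>lcarrier L. ladd L (lzero L) x = x) \<and>
     (\<forall>x\<in>lcarrier L. \<exists>y\<in>lcarrier L. ladd L x y = lzero L) \<and>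
     (\<forall>c. \<forall>x\<in>lcarrier L. \<forall>y\<in>lcarrier L.
        lsmult L c (ladd L x y) = ladd L (lsmult L c x) (lsmult L c y)) \<and>
     (\<forall>c d. \<forall>x\<in>lcarrier L. lsmult L (c + d) x = ladd L (lsmult L c x) (lsmult L d x)) \<and>
     (\<forall>c d. \<forall>x\<in>lcarrier L. lsmult L (c * d) x = lsmult L c (lsmult L d x)) \<and>
     (\<forall>x\<in>lcarrier L. lsmult L 1 x = x)"

definition leibniz :: "('k::field, 'a) leib \<Rightarrow> bool" where
  "leibniz L \<longleftrightarrow> vecspace L \<and>
     (\<forall>x\<in>lcarrier L. \<forall>y\<in>lcarrier L. lbr L x y \<in> lcarrier L) \<and>
     (\<forall>x\<in>lcarrier L. \<forall>y\<in>lcarrier L. \<forall>z\<in>lcarrier L.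
        lbr L (ladd L x y) z = ladd L (lbr L x z) (lbr L y z) \<and>
        lbr L x (ladd L y z) = ladd L (lbr L x y) (lbr L x z)) \<and>
     (\<forall>c. \<forall>x\<in>lcarrier L. \<forall>y\<in>lcarrier L.
        lbr L (lsmult L c x) y = lsmult L c (lbr L x y) \<and>
        lbr L x (lsmult L c y) = lsmult L c (lbr L x y)) \<and>
     (\<forall>x\<in>lcarrier L. \<forall>y\<in>lcarrier L. \<forall>z\<in>lcarrier L.
        lbr L x (lbr L y z) = lsub L (lbr L (lbr L x y) z) (lbr L (lbr L x z) y))"

definition lie :: "('k::field, 'a) leib \<Rightarrow> 'a \<Rightarrow> 'a \<Rightarrow> 'a" where
  "lie L x y = ladd L (lbr L x y) (lbr L y x)"

definition ideal :: "('k::field, 'a) leib \<Rightarrow> 'a set \<Rightarrow> bool" where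
  "ideal L I \<longleftrightarrow> I \<subseteq> lcarrier L \<and> lzero L \<in> I \<and>
     (\<forall>x\<in>I. \<forall>y\<in>I. ladd L x y \<in> I) \<and> (\<forall>c. \<forall>x\<in>I. lsmult L c x \<in> I) \<and>
     (\<forall>x\<in>I. \<forall>y\<in>lcarrier L. lbr L x y \<in> I \<and> lbr L y x \<in> I)"

definition gen_ideal :: "('k::field, 'a) leib \<Rightarrow> 'a set \<Rightarrow> 'a set" where
  "gen_ideal L S = \<Inter> {I. ideal L I \<and> S \<subseteq> I}"

definition lie_comm :: "('k::field, 'a) leib \<Rightarrow> 'a set \<Rightarrow> 'a set \<Rightarrow> 'a set" where
  "lie_comm L M N = gen_ideal L {lie L m x | m x. m \<in> M \<and> x \<in> N}"

text \<open>Lower Lie-central series, indexed as in the paper: gammaL L 1 = carrier,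
  gammaL L (i+1) = [gammaL L i, carrier]_Lie for i \<ge> 1.  (Index 0 is unused; set to carrier.)\<close>
fun gammaL :: "('k::field, 'a) leib \<Rightarrow> nat \<Rightarrow> 'a set" where
  "gammaL L 0 = lcarrier L"
| "gammaL L (Suc 0) = lcarrier L"
| "gammaL L (Suc (Suc i)) = lie_comm L (gammaL L (Suc i)) (lcarrier L)"

fun zetaL :: "('k::field, 'a) leib \<Rightarrow> nat \<Rightarrow> 'a set" where
  "zetaL L 0 = {lzero L}"
| "zetaL L (Suc i) = {x \<in> lcarrier L. \<forall>y\<in>lcarrier L. lie L x y \<in> zetaL L i}"

fun iter_lie :: "('k::field, 'a) leib \<Rightarrow> (nat \<Rightarrow> 'a) \<Rightarrow> nat \<Rightarrow> 'a" where
  "iter_lie L x 0 = x 0"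
| "iter_lie L x (Suc k) = lie L (iter_lie L x k) (x (Suc k))"

definition subalg :: "('k, 'a) leib \<Rightarrow> 'a set \<Rightarrow> ('k, 'a) leib" where
  "subalg L S = L\<lparr>lcarrier := S\<rparr>"

definition dsum :: "('k, 'a) leib \<Rightarrow> ('k, 'b) leib \<Rightarrow> ('k, 'a \<times> 'b) leib" where
  "dsum A B = \<lparr> lcarrier = lcarrier A \<times> lcarrier B,
      ladd = (\<lambda>(a, b) (a', b'). (ladd A a a', ladd B b b')),
      lzero = (lzero A, lzero B),
      lsmult = (\<lambda>c (a, b). (lsmult A c a, lsmult B c b)),
      lbr = (\<lambda>(a, b) (a', b'). (lbr A a a', lbr B b b')) \<rparr>"

definition coset :: "('k, 'a) leib \<Rightarrow> 'a \<Rightarrow> 'a set \<Rightarrow> 'a set" where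
  "coset L x I = {ladd L x i | i. i \<in> I}"

definition qrep :: "'a set \<Rightarrow> 'a" where
  "qrep X = (SOME x. x \<in> X)"

definition quot :: "('k, 'a) leib \<Rightarrow> 'a set \<Rightarrow> ('k, 'a set) leib" where
  "quot L I = \<lparr> lcarrier = (\<lambda>x. coset L x I) ` lcarrier L,
      ladd = (\<lambda>X Y. coset L (ladd L (qrep X) (qrep Y)) I),
      lzero = coset L (lzero L) I,
      lsmult = (\<lambda>c X. coset L (lsmult L c (qrep X)) I),
      lbr = (\<lambda>X Y. coset L (lbr L (qrep X) (qrep Y)) I) \<rparr>"

definition leib_hom :: "('a \<Rightarrow> 'b) \<Rightarrow> ('k, 'a) leib \<Rightarrow> ('k, 'b) leib \<Rightarrow> bool" where
  "leib_hom f A B \<longleftrightarrow>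
     (\<forall>x\<in>lcarrier A. f x \<in> lcarrier B) \<and>
     (\<forall>x\<in>lcarrier A. \<forall>y\<in>lcarrier A. f (ladd A x y) = ladd B (f x) (f y)) \<and>
     (\<forall>c. \<forall>x\<in>lcarrier A. f (lsmult A c x) = lsmult B c (f x)) \<and>
     (\<forall>x\<in>lcarrier A. \<forall>y\<in>lcarrier A. f (lbr A x y) = lbr B (f x) (f y))"

definition leib_iso :: "('a \<Rightarrow> 'b) \<Rightarrow> ('k, 'a) leib \<Rightarrow> ('k, 'b) leib \<Rightarrow> bool" where
  "leib_iso f A B \<longleftrightarrow> leib_hom f A B \<and> bij_betw f (lcarrier A) (lcarrier B)"

definition lie_isoclinism ::
  "nat \<Rightarrow> ('k::field, 'a) leib \<Rightarrow> ('k, 'b) leib \<Rightarrow> ('a set \<Rightarrow> 'b set) \<Rightarrow> ('a \<Rightarrow> 'b) \<Rightarrow> bool" where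
  "lie_isoclinism n A B \<eta> \<xi> \<longleftrightarrow>
     leib_iso \<eta> (quot A (zetaL A n)) (quot B (zetaL B n)) \<and>
     leib_iso \<xi> (subalg A (gammaL A (Suc n))) (subalg B (gammaL B (Suc n))) \<and>
     (\<forall>x y. (\<forall>i\<le>n. x i \<in> lcarrier A \<and> y i \<in> lcarrier B \<and>
                     \<eta> (coset A (x i) (zetaL A n)) = coset B (y i) (zetaL B n))
            \<longrightarrow> \<xi> (iter_lie A x n) = iter_lie B y n)"

definition lie_isoclinic :: "nat \<Rightarrow> ('k::field, 'a) leib \<Rightarrow> ('k, 'b) leib \<Rightarrow> bool" where
  "lie_isoclinic n A B \<longleftrightarrow> (\<exists>\<eta> \<xi>. lie_isoclinism n A B \<eta> \<xi>)"

definition Kset :: "nat \<Rightarrow> ('k::field, 'a) leib \<Rightarrow> ('k, 'b) leib \<Rightarrow> ('a set \<Rightarrow> 'b set) \<Rightarrow> ('a \<times> 'b) set" where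
  "Kset n A B \<eta> = {(g, h). g \<in> lcarrier A \<and> h \<in> lcarrier B \<and>
                       \<eta> (coset A g (zetaL A n)) = coset B h (zetaL B n)}"

definition Kalg :: "nat \<Rightarrow> ('k::field, 'a) leib \<Rightarrow> ('k, 'b) leib \<Rightarrow> ('a set \<Rightarrow> 'b set) \<Rightarrow> ('k, 'a \<times> 'b) leib" where
  "Kalg n A B \<eta> = subalg (dsum A B) (Kset n A B \<eta>)"

definition Zfst :: "nat \<Rightarrow> ('k::field, 'a) leib \<Rightarrow> ('k, 'b) leib \<Rightarrow> ('a \<times> 'b) set" where
  "Zfst n A B = {(g, lzero B) | g. g \<in> zetaL A n}"

definition Zsnd :: "nat \<Rightarrow> ('k::field, 'a) leib \<Rightarrow> ('k, 'b) leib \<Rightarrow> ('a \<times> 'b) set" where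
  "Zsnd n A B = {(lzero A, h) | h. h \<in> zetaL B n}"

end

theory Submission
  imports Defs
begin

text \<open>The projections of K onto g1 and g2 are surjective with kernels Z_g2 and Z_g1 (the latter
  because \<eta> is injective), so K/Z_g2 \<cong> g1 and K/Z_g1 \<cong> g2. Isomorphic algebras are
  n-Lie-isoclinic, hence K/Z_g2 ~ g1 ~ g2 ~ K/Z_g1. Moreover, for such algebras L, L ~ L \<oplus> N
  whenever \<gamma>_(n+1)(N) = 0: the projection L \<oplus> N \<rightarrow> L induces an isoclinism, since
  Z_n(L \<oplus> N) = Z_n(L) \<times> N and \<gamma>_(n+1)(L \<oplus> N) = \<gamma>_(n+1)(L) \<times> 0. Taking
  N = K/\<gamma>_(n+1)(K) gives both claims.\<close>

definition lneg :: "('k::field, 'a) leib \<Rightarrow> 'a \<Rightarrow> 'a" where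
  "lneg L x = lsmult L (-1) x"

lemma vecspaceI:
  assumes "lzero L \<in> lcarrier L"
    and "\<And>x y. x \<in> lcarrier L \<Longrightarrow> y \<in> lcarrier L \<Longrightarrow> ladd L x y \<in> lcarrier L"
    and "\<And>c x. x \<in> lcarrier L \<Longrightarrow> lsmult L c x \<in> lcarrier L"
    and "\<And>x y z. x \<in> lcarrier L \<Longrightarrow> y \<in> lcarrier L \<Longrightarrow> z \<in> lcarrier L \<Longrightarrow>
        ladd L (ladd L x y) z = ladd L x (ladd L y z)"
    and "\<And>x y. x \<in> lcarrier L \<Longrightarrow> y \<in> lcarrier L \<Longrightarrow> ladd L x y = ladd L y x"
    and "\<And>x. x \<in> lcarrier L \<Longrightarrow> ladd L (lzero L) x = x"
    and "\<And>x. x \<in> lcarrier L \<Longrightarrow> \<exists>y\<in>lcarrier L. ladd L x y = lzero L"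
    and "\<And>c x y. x \<in> lcarrier L \<Longrightarrow> y \<in> lcarrier L \<Longrightarrow>
        lsmult L c (ladd L x y) = ladd L (lsmult L c x) (lsmult L c y)"
    and "\<And>c d x. x \<in> lcarrier L \<Longrightarrow> lsmult L (c + d) x = ladd L (lsmult L c x) (lsmult L d x)"
    and "\<And>c d x. x \<in> lcarrier L \<Longrightarrow> lsmult L (c * d) x = lsmult L c (lsmult L d x)"
    and "\<And>x. x \<in> lcarrier L \<Longrightarrow> lsmult L 1 x = x"
  shows "vecspace L"
  unfolding vecspace_def by (intro conjI ballI allI) (fact assms; assumption)+

lemma leibnizI:
  assumes "vecspace L"
    and "\<And>x y. x \<in> lcarrier L \<Longrightarrow> y \<in> lcarrier L \<Longrightarrow> lbr L x y \<in> lcarrier L"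
    and "\<And>x y z. x \<in> lcarrier L \<Longrightarrow> y \<in> lcarrier L \<Longrightarrow> z \<in> lcarrier L \<Longrightarrow>
        lbr L (ladd L x y) z = ladd L (lbr L x z) (lbr L y z)"
    and "\<And>x y z. x \<in> lcarrier L \<Longrightarrow> y \<in> lcarrier L \<Longrightarrow> z \<in> lcarrier L \<Longrightarrow>
        lbr L x (ladd L y z) = ladd L (lbr L x y) (lbr L x z)"
    and "\<And>c x y. x \<in> lcarrier L \<Longrightarrow> y \<in> lcarrier L \<Longrightarrow> lbr L (lsmult L c x) y = lsmult L c (lbr L x y)"
    and "\<And>c x y. x \<in> lcarrier L \<Longrightarrow> y \<in> lcarrier L \<Longrightarrow> lbr L x (lsmult L c y) = lsmult L c (lbr L x y)"
    and "\<And>x y z. x \<in> lcarrier L \<Longrightarrow> y \<in> lcarrier L \<Longrightarrow> z \<in> lcarrier L \<Longrightarrow>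
        lbr L x (lbr L y z) = ladd L (lbr L (lbr L x y) z) (lneg L (lbr L (lbr L x z) y))"
  shows "leibniz L"
  unfolding leibniz_def lsub_def by (intro conjI ballI allI) (fact assms[unfolded lneg_def]; assumption)+

locale leibniz_alg =
  fixes L :: "('k::field, 'a) leib"
  assumes leibniz: "leibniz L"
begin

lemma zero_closed [simp, intro]: "lzero L \<in> lcarrier L"
  using leibniz unfolding leibniz_def vecspace_def by metis
lemma add_closed [simp, intro]: "x \<in> lcarrier L \<Longrightarrow> y \<in> lcarrier L \<Longrightarrow> ladd L x y \<in> lcarrier L"
  using leibniz unfolding leibniz_def vecspace_def by metis
lemma smult_closed [simp, intro]: "x \<in> lcarrier L \<Longrightarrow> lsmult L c x \<in> lcarrier L"
  using leibniz unfolding leibniz_def vecspace_def by metis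
lemma neg_closed [simp, intro]: "x \<in> lcarrier L \<Longrightarrow> lneg L x \<in> lcarrier L"
  by (simp add: lneg_def)
lemma br_closed [simp, intro]: "x \<in> lcarrier L \<Longrightarrow> y \<in> lcarrier L \<Longrightarrow> lbr L x y \<in> lcarrier L"
  using leibniz unfolding leibniz_def vecspace_def by metis
lemma lie_closed [simp, intro]: "x \<in> lcarrier L \<Longrightarrow> y \<in> lcarrier L \<Longrightarrow> lie L x y \<in> lcarrier L"
  by (simp add: lie_def)

lemma add_assoc: "x \<in> lcarrier L \<Longrightarrow> y \<in> lcarrier L \<Longrightarrow> z \<in> lcarrier L \<Longrightarrow>
    ladd L (ladd L x y) z = ladd L x (ladd L y z)"
  using leibniz unfolding leibniz_def vecspace_def by metis
lemma add_commute: "x \<in> lcarrier L \<Longrightarrow> y \<in> lcarrier L \<Longrightarrow> ladd L x y = ladd L y x"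
  using leibniz unfolding leibniz_def vecspace_def by metis
lemma add_left_commute: "x \<in> lcarrier L \<Longrightarrow> y \<in> lcarrier L \<Longrightarrow> z \<in> lcarrier L \<Longrightarrow>
    ladd L x (ladd L y z) = ladd L y (ladd L x z)"
  by (metis add_assoc add_commute)
lemma zero_add [simp]: "x \<in> lcarrier L \<Longrightarrow> ladd L (lzero L) x = x"
  using leibniz unfolding leibniz_def vecspace_def by metis
lemma add_zero [simp]: "x \<in> lcarrier L \<Longrightarrow> ladd L x (lzero L) = x"
  by (metis add_commute zero_add zero_closed)
lemma smult_add_right: "x \<in> lcarrier L \<Longrightarrow> y \<in> lcarrier L \<Longrightarrow>
    lsmult L c (ladd L x y) = ladd L (lsmult L c x) (lsmult L c y)"
  using leibniz unfolding leibniz_def vecspace_def by metis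
lemma smult_add_left: "x \<in> lcarrier L \<Longrightarrow> lsmult L (c + d) x = ladd L (lsmult L c x) (lsmult L d x)"
  using leibniz unfolding leibniz_def vecspace_def by metis
lemma smult_smult: "x \<in> lcarrier L \<Longrightarrow> lsmult L (c * d) x = lsmult L c (lsmult L d x)"
  using leibniz unfolding leibniz_def vecspace_def by metis
lemma smult_one [simp]: "x \<in> lcarrier L \<Longrightarrow> lsmult L 1 x = x"
  using leibniz unfolding leibniz_def vecspace_def by metis
lemma br_add_left: "x \<in> lcarrier L \<Longrightarrow> y \<in> lcarrier L \<Longrightarrow> z \<in> lcarrier L \<Longrightarrow>
    lbr L (ladd L x y) z = ladd L (lbr L x z) (lbr L y z)"
  using leibniz unfolding leibniz_def vecspace_def by metis
lemma br_add_right: "x \<in> lcarrier L \<Longrightarrow> y \<in> lcarrier L \<Longrightarrow> z \<in> lcarrier L \<Longrightarrow>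
    lbr L x (ladd L y z) = ladd L (lbr L x y) (lbr L x z)"
  using leibniz unfolding leibniz_def vecspace_def by metis
lemma br_smult_left: "x \<in> lcarrier L \<Longrightarrow> y \<in> lcarrier L \<Longrightarrow> lbr L (lsmult L c x) y = lsmult L c (lbr L x y)"
  using leibniz unfolding leibniz_def vecspace_def by metis
lemma br_smult_right: "x \<in> lcarrier L \<Longrightarrow> y \<in> lcarrier L \<Longrightarrow> lbr L x (lsmult L c y) = lsmult L c (lbr L x y)"
  using leibniz unfolding leibniz_def vecspace_def by metis
lemma leibniz_identity: "x \<in> lcarrier L \<Longrightarrow> y \<in> lcarrier L \<Longrightarrow> z \<in> lcarrier L \<Longrightarrow>
    lbr L x (lbr L y z) = ladd L (lbr L (lbr L x y) z) (lneg L (lbr L (lbr L x z) y))"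
  using leibniz by (simp add: leibniz_def lsub_def lneg_def)

lemma add_left_cancel:
  assumes "x \<in> lcarrier L" "y \<in> lcarrier L" "z \<in> lcarrier L" "ladd L x y = ladd L x z"
  shows "y = z"
proof -
  obtain w where "w \<in> lcarrier L" "ladd L x w = lzero L"
    using leibniz assms(1) unfolding leibniz_def vecspace_def by metis
  then have w: "w \<in> lcarrier L" "ladd L w x = lzero L"
    using assms(1) add_commute by auto
  have "ladd L (ladd L w x) y = ladd L (ladd L w x) z"
    using assms w(1) by (simp add: add_assoc)
  then show ?thesis using w(2) assms(2,3) by simp
qed

lemma smult_zero [simp]: "x \<in> lcarrier L \<Longrightarrow> lsmult L 0 x = lzero L"
  using smult_add_left[of x 0 0] add_left_cancel[of "lsmult L 0 x" _ "lzero L"] by simp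

lemma smult_zero_right [simp]: "lsmult L c (lzero L) = lzero L"
  using smult_add_right[of "lzero L" "lzero L" c] add_left_cancel[of "lsmult L c (lzero L)" _ "lzero L"]
  by simp

lemma add_neg [simp]: "x \<in> lcarrier L \<Longrightarrow> ladd L x (lneg L x) = lzero L"
  using smult_add_left[of x 1 "-1"] by (simp add: lneg_def)
lemma neg_add [simp]: "x \<in> lcarrier L \<Longrightarrow> ladd L (lneg L x) x = lzero L"
  by (simp add: add_commute)
lemma add_neg_cancel [simp]: "x \<in> lcarrier L \<Longrightarrow> y \<in> lcarrier L \<Longrightarrow> ladd L x (ladd L (lneg L x) y) = y"
  by (simp flip: add_assoc)
lemma neg_add_cancel [simp]: "x \<in> lcarrier L \<Longrightarrow> y \<in> lcarrier L \<Longrightarrow> ladd L (lneg L x) (ladd L x y) = y"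
  by (simp flip: add_assoc)
lemma neg_add_distrib: "x \<in> lcarrier L \<Longrightarrow> y \<in> lcarrier L \<Longrightarrow>
    lneg L (ladd L x y) = ladd L (lneg L x) (lneg L y)"
  unfolding lneg_def by (simp add: smult_add_right)

lemma add_neg_eq_zero_iff:
  "x \<in> lcarrier L \<Longrightarrow> y \<in> lcarrier L \<Longrightarrow> ladd L x (lneg L y) = lzero L \<longleftrightarrow> x = y"
  by (metis add_assoc add_neg neg_add neg_closed add_zero zero_add)

lemma lsub_eq: "lsub L x y = ladd L x (lneg L y)"
  by (simp add: lsub_def lneg_def)

lemma br_zero_left [simp]: "y \<in> lcarrier L \<Longrightarrow> lbr L (lzero L) y = lzero L"
  using br_smult_left[of "lzero L" y 0] by simp
lemma br_zero_right [simp]: "y \<in> lcarrier L \<Longrightarrow> lbr L y (lzero L) = lzero L"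
  using br_smult_right[of y "lzero L" 0] by simp

lemma lie_commute: "x \<in> lcarrier L \<Longrightarrow> y \<in> lcarrier L \<Longrightarrow> lie L x y = lie L y x"
  unfolding lie_def by (simp add: add_commute)
lemma lie_add_left: "x \<in> lcarrier L \<Longrightarrow> y \<in> lcarrier L \<Longrightarrow> z \<in> lcarrier L \<Longrightarrow>
    lie L (ladd L x y) z = ladd L (lie L x z) (lie L y z)"
  unfolding lie_def by (simp add: br_add_left br_add_right add_assoc add_left_commute[of "lbr L z x"])
lemma lie_smult_left: "x \<in> lcarrier L \<Longrightarrow> y \<in> lcarrier L \<Longrightarrow>
    lie L (lsmult L c x) y = lsmult L c (lie L x y)"
  unfolding lie_def by (simp add: br_smult_left br_smult_right smult_add_right)

section \<open>The Lie-central series\<close>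

lemma br_lie_right_zero:
  assumes "x \<in> lcarrier L" "y \<in> lcarrier L" "z \<in> lcarrier L"
  shows "lbr L x (lie L y z) = lzero L"
  using assms by (simp add: lie_def br_add_right leibniz_identity add_assoc)

lemma lie_lie_left:
  "x \<in> lcarrier L \<Longrightarrow> y \<in> lcarrier L \<Longrightarrow> z \<in> lcarrier L \<Longrightarrow>
    lie L (lie L y z) x = lbr L (lie L y z) x"
  by (simp add: lie_def[of L "lie L y z" x] br_lie_right_zero)

lemma lie_zero_left [simp]: "y \<in> lcarrier L \<Longrightarrow> lie L (lzero L) y = lzero L"
  by (simp add: lie_def)

text \<open>This identity is what makes the upper Lie-central series closed under the bracket: it
  writes [[x,z],y]_lie through symmetrised brackets having x or [x,y]_lie as an entry.\<close>
lemma lie_br_left: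
  assumes x: "x \<in> lcarrier L" and y: "y \<in> lcarrier L" and z: "z \<in> lcarrier L"
  shows "lie L (lbr L x z) y =
    ladd L (lie L x (lbr L z y)) (ladd L (lbr L (lie L x y) z) (lneg L (lie L (lie L z y) x)))"
proof -
  define A where "A = lbr L (lbr L x z) y"
  define B where "B = lbr L (lbr L y x) z"
  define C where "C = lbr L (lbr L y z) x"
  define D where "D = lbr L (lbr L x y) z"
  define E where "E = lbr L (lbr L z y) x"
  have c: "A \<in> lcarrier L" "B \<in> lcarrier L" "C \<in> lcarrier L" "D \<in> lcarrier L" "E \<in> lcarrier L"
    using x y z by (auto simp: A_def B_def C_def D_def E_def)
  have "lie L (lbr L x z) y = ladd L A (ladd L B (lneg L C))"
    unfolding lie_def A_def B_def C_def using x y z leibniz_identity by simp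
  moreover have "lie L x (lbr L z y) = ladd L (ladd L A (lneg L D)) E"
    unfolding lie_def A_def D_def E_def using x y z leibniz_identity by simp
  moreover have "lbr L (lie L x y) z = ladd L D B"
    unfolding lie_def B_def D_def using x y z by (simp add: br_add_left)
  moreover have "lie L (lie L z y) x = ladd L E C"
  proof -
    have "lie L (lie L z y) x = lbr L (lie L z y) x" using x y z by (simp add: lie_lie_left)
    then show ?thesis unfolding lie_def[of L z y] C_def E_def using x y z by (simp add: br_add_left)
  qed
  ultimately show ?thesis using c
    by (simp add: neg_add_distrib add_assoc add_left_commute[of E D] add_left_commute[of E B])
qed

lemma zetaL_closed: "zetaL L k \<subseteq> lcarrier L"
  by (cases k) auto

lemma zetaL_zero [simp]: "lzero L \<in> zetaL L k"
  by (induction k) auto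

lemma zetaL_add: "x \<in> zetaL L k \<Longrightarrow> y \<in> zetaL L k \<Longrightarrow> ladd L x y \<in> zetaL L k"
  by (induction k arbitrary: x y) (auto simp: lie_add_left)

lemma zetaL_smult: "x \<in> zetaL L k \<Longrightarrow> lsmult L c x \<in> zetaL L k"
  by (induction k arbitrary: x) (auto simp: lie_smult_left)

lemma zetaL_neg: "x \<in> zetaL L k \<Longrightarrow> lneg L x \<in> zetaL L k"
  by (simp add: lneg_def zetaL_smult)

lemma zetaL_mono: "zetaL L k \<subseteq> zetaL L (Suc k)"
  by (induction k) auto

lemma zetaL_br_left: "x \<in> zetaL L k \<Longrightarrow> z \<in> lcarrier L \<Longrightarrow> lbr L x z \<in> zetaL L k"
proof (induction k arbitrary: x z)
  case (Suc k)
  have x: "x \<in> lcarrier L" using Suc.prems zetaL_closed by blast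
  have "lie L (lbr L x z) y \<in> zetaL L k" if y: "y \<in> lcarrier L" for y
  proof -
    have "lie L x (lbr L z y) \<in> zetaL L k" using Suc.prems y by simp
    moreover have "lbr L (lie L x y) z \<in> zetaL L k" using Suc.prems y by (intro Suc.IH) auto
    moreover have "lie L (lie L z y) x \<in> zetaL L k"
      using Suc.prems y x lie_commute[of "lie L z y" x] by simp
    ultimately show ?thesis
      using lie_br_left[OF x y Suc.prems(2)] zetaL_add zetaL_neg by simp
  qed
  then show ?case using x Suc.prems by simp
qed simp

lemma zetaL_br_right: "x \<in> zetaL L k \<Longrightarrow> z \<in> lcarrier L \<Longrightarrow> lbr L z x \<in> zetaL L k"
proof (cases k)
  case (Suc m)
  assume x: "x \<in> zetaL L k" and z: "z \<in> lcarrier L"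
  have xc: "x \<in> lcarrier L" using x zetaL_closed by blast
  have "lbr L z x = ladd L (lie L x z) (lneg L (lbr L x z))"
    unfolding lie_def using xc z add_commute[of "lbr L x z" "lbr L z x"] by (simp add: add_assoc)
  moreover have "lie L x z \<in> zetaL L k" using x z Suc zetaL_mono by auto
  ultimately show ?thesis using zetaL_br_left[OF x z] zetaL_add zetaL_neg by simp
qed simp

lemma ideal_zetaL: "ideal L (zetaL L k)"
  unfolding ideal_def using zetaL_closed zetaL_add zetaL_smult zetaL_br_left zetaL_br_right by auto

lemma ideal_carrier: "ideal L (lcarrier L)"
  unfolding ideal_def by auto

lemma ideal_gen_ideal: "S \<subseteq> lcarrier L \<Longrightarrow> ideal L (gen_ideal L S)"
  unfolding gen_ideal_def ideal_def by (auto simp: ideal_carrier)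

lemma ideal_gammaL: "ideal L (gammaL L k)"
proof (induction k)
  case (Suc k)
  show ?case
  proof (cases k)
    case (Suc i)
    have "gammaL L k \<subseteq> lcarrier L" using Suc.IH by (simp add: ideal_def)
    then have "{lie L m x | m x. m \<in> gammaL L k \<and> x \<in> lcarrier L} \<subseteq> lcarrier L" by auto
    then show ?thesis using Suc by (simp add: lie_comm_def ideal_gen_ideal)
  qed (simp add: ideal_carrier)
qed (simp add: ideal_carrier)

lemma gammaL_closed: "gammaL L k \<subseteq> lcarrier L"
  using ideal_gammaL by (simp add: ideal_def)

end

lemma gen_ideal_superset: "S \<subseteq> gen_ideal L S"
  unfolding gen_ideal_def by blast

lemma gen_ideal_least: "ideal L J \<Longrightarrow> S \<subseteq> J \<Longrightarrow> gen_ideal L S \<subseteq> J"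
  unfolding gen_ideal_def by blast

lemma lie_mem_gammaL:
  assumes "m \<in> gammaL L (Suc i)" "x \<in> lcarrier L"
  shows "lie L m x \<in> gammaL L (Suc (Suc i))"
proof -
  have "lie L m x \<in> {lie L m x | m x. m \<in> gammaL L (Suc i) \<and> x \<in> lcarrier L}"
    using assms by blast
  then show ?thesis unfolding gammaL.simps lie_comm_def by (rule subsetD[OF gen_ideal_superset])
qed

lemma (in leibniz_alg) iter_lie_mem_gammaL:
  "(\<forall>i\<le>k. x i \<in> lcarrier L) \<Longrightarrow> iter_lie L x k \<in> gammaL L (Suc k)"
  by (induction k) (auto intro: lie_mem_gammaL simp del: gammaL.simps(3))

lemma (in leibniz_alg) iter_lie_closed:
  "(\<forall>i\<le>k. x i \<in> lcarrier L) \<Longrightarrow> iter_lie L x k \<in> lcarrier L"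
  by (induction k) auto

section \<open>Quotients and homomorphisms\<close>

locale leibniz_quot = leibniz_alg +
  fixes I assumes ideal: "ideal L I"
begin

lemma ideal_closed: "i \<in> I \<Longrightarrow> i \<in> lcarrier L"
  using ideal by (auto simp: ideal_def)

lemma ideal_add: "i \<in> I \<Longrightarrow> j \<in> I \<Longrightarrow> ladd L i j \<in> I"
  using ideal by (simp add: ideal_def)

lemma ideal_neg: "i \<in> I \<Longrightarrow> lneg L i \<in> I"
  using ideal by (simp add: ideal_def lneg_def)

lemma coset_self: "a \<in> lcarrier L \<Longrightarrow> a \<in> coset L a I"
  unfolding coset_def using ideal add_zero[of a] by (auto simp: ideal_def intro!: exI[of _ "lzero L"])

lemma coset_eq_iff:
  assumes a: "a \<in> lcarrier L" and b: "b \<in> lcarrier L"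
  shows "coset L a I = coset L b I \<longleftrightarrow> lsub L a b \<in> I"
proof
  assume "coset L a I = coset L b I"
  then obtain i where i: "i \<in> I" "a = ladd L b i"
    using coset_self[OF a] by (auto simp: coset_def)
  then have "lsub L a b = i"
    using b ideal_closed by (simp add: lsub_eq add_commute[of b] add_assoc)
  then show "lsub L a b \<in> I" using i by simp
next
  assume ab: "lsub L a b \<in> I"
  define i where "i = lsub L a b"
  have i: "i \<in> I" "i \<in> lcarrier L" and a_eq: "a = ladd L b i"
    using ab a b by (auto simp: i_def lsub_eq add_left_commute[of b a])
  have "ladd L a j = ladd L b (ladd L i j)" if "j \<in> I" for j
    using that i b a_eq ideal_closed by (simp add: add_assoc)
  moreover have "ladd L b j = ladd L a (ladd L (lneg L i) j)" if "j \<in> I" for j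
    using that i b a_eq ideal_closed by (simp add: add_assoc)
  ultimately show "coset L a I = coset L b I"
    unfolding coset_def using i ideal_add ideal_neg by blast
qed

lemma coset_eq_zero_iff:
  "a \<in> lcarrier L \<Longrightarrow> coset L a I = coset L (lzero L) I \<longleftrightarrow> a \<in> I"
  by (simp add: coset_eq_iff lsub_eq lneg_def)

lemma qrep_in_coset: "a \<in> lcarrier L \<Longrightarrow> qrep (coset L a I) \<in> coset L a I"
  unfolding qrep_def using coset_self by (rule someI)

lemma coset_add_ideal: "a \<in> lcarrier L \<Longrightarrow> i \<in> I \<Longrightarrow> coset L (ladd L a i) I = coset L a I"
  using ideal_closed by (simp add: coset_eq_iff lsub_eq add_commute[of a] add_assoc)

lemma qrep_coset:
  assumes "a \<in> lcarrier L"
  obtains i where "i \<in> I" "qrep (coset L a I) = ladd L a i"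
  using qrep_in_coset[OF assms] unfolding coset_def by blast

lemma quot_add [simp]:
  assumes a: "a \<in> lcarrier L" and b: "b \<in> lcarrier L"
  shows "ladd (quot L I) (coset L a I) (coset L b I) = coset L (ladd L a b) I"
proof -
  obtain i j where ij: "i \<in> I" "j \<in> I"
    "qrep (coset L a I) = ladd L a i" "qrep (coset L b I) = ladd L b j"
    using qrep_coset[OF a] qrep_coset[OF b] by metis
  have "ladd L (ladd L a i) (ladd L b j) = ladd L (ladd L a b) (ladd L i j)"
    using a b ij ideal_closed by (simp add: add_assoc add_left_commute[of i b])
  then show ?thesis
    using a b ij by (simp add: quot_def coset_add_ideal ideal_add)
qed

lemma quot_smult [simp]:
  assumes a: "a \<in> lcarrier L"
  shows "lsmult (quot L I) c (coset L a I) = coset L (lsmult L c a) I"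
proof -
  obtain i where i: "i \<in> I" "qrep (coset L a I) = ladd L a i"
    using qrep_coset[OF a] by metis
  have "lsmult L c i \<in> I" using i ideal by (simp add: ideal_def)
  then show ?thesis
    using a i ideal_closed by (simp add: quot_def smult_add_right coset_add_ideal)
qed

lemma quot_br [simp]:
  assumes a: "a \<in> lcarrier L" and b: "b \<in> lcarrier L"
  shows "lbr (quot L I) (coset L a I) (coset L b I) = coset L (lbr L a b) I"
proof -
  obtain i j where ij: "i \<in> I" "j \<in> I"
    "qrep (coset L a I) = ladd L a i" "qrep (coset L b I) = ladd L b j"
    using qrep_coset[OF a] qrep_coset[OF b] by metis
  have ijc: "i \<in> lcarrier L" "j \<in> lcarrier L" using ij ideal_closed by auto
  have "lbr L (ladd L a i) (ladd L b j) =
      ladd L (lbr L a b) (ladd L (lbr L a j) (ladd L (lbr L i b) (lbr L i j)))"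
    using a b ijc by (simp add: br_add_left br_add_right add_assoc add_left_commute[of "lbr L i b"])
  moreover have "ladd L (lbr L a j) (ladd L (lbr L i b) (lbr L i j)) \<in> I"
    using ideal ij a b ijc by (simp add: ideal_def)
  ultimately show ?thesis
    using a b ij by (simp add: quot_def coset_add_ideal)
qed

lemma quot_zero: "lzero (quot L I) = coset L (lzero L) I"
  by (simp add: quot_def)

lemma coset_in_quot [simp]: "a \<in> lcarrier L \<Longrightarrow> coset L a I \<in> lcarrier (quot L I)"
  by (simp add: quot_def)

lemma hom_coset: "leib_hom (\<lambda>a. coset L a I) L (quot L I)"
  by (simp add: leib_hom_def)

lemma coset_image: "(\<lambda>a. coset L a I) ` lcarrier L = lcarrier (quot L I)"
  by (simp add: quot_def)

end

lemma leibniz_surj_hom_image: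
  assumes L: "leibniz L" and f: "leib_hom f L M" and surj: "f ` lcarrier L = lcarrier M"
    and zero: "f (lzero L) = lzero M"
  shows "leibniz M"
proof -
  interpret leibniz_alg L by (rule leibniz_alg.intro, rule L)
  have cases: "P" if "x \<in> lcarrier M" "\<And>a. a \<in> lcarrier L \<Longrightarrow> x = f a \<Longrightarrow> P" for x P
    using that surj by blast
  have c: "a \<in> lcarrier L \<Longrightarrow> f a \<in> lcarrier M" for a using surj by blast
  have ops: "\<And>a b. a \<in> lcarrier L \<Longrightarrow> b \<in> lcarrier L \<Longrightarrow> ladd M (f a) (f b) = f (ladd L a b)"
    "\<And>a b. a \<in> lcarrier L \<Longrightarrow> b \<in> lcarrier L \<Longrightarrow> lbr M (f a) (f b) = f (lbr L a b)"
    "\<And>a c. a \<in> lcarrier L \<Longrightarrow> lsmult M c (f a) = f (lsmult L c a)"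
    using f by (simp_all add: leib_hom_def)
  have neg: "lneg M (f a) = f (lneg L a)" if "a \<in> lcarrier L" for a
    using that ops(3) by (simp add: lneg_def)
  have inverse: "\<exists>y\<in>lcarrier M. ladd M x y = lzero M" if "x \<in> lcarrier M" for x
    using that by (elim cases) (metis c neg_closed add_neg ops(1) zero)
  show ?thesis
  proof (rule leibnizI[OF vecspaceI])
    show "lzero M \<in> lcarrier M" using c zero zero_closed by metis
    show "\<exists>y\<in>lcarrier M. ladd M x y = lzero M" if "x \<in> lcarrier M" for x
      using that by (rule inverse)
  qed (elim cases; simp add: ops c neg zero[symmetric]
        add_assoc add_commute add_left_commute smult_add_right smult_add_left smult_smult
        br_add_left br_add_right br_smult_left br_smult_right leibniz_identity)+
qed

lemma leib_hom_comp: "leib_hom f A B \<Longrightarrow> leib_hom g B C \<Longrightarrow> leib_hom (g \<circ> f) A C"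
  by (simp add: leib_hom_def)

definition hom_kernel :: "('a \<Rightarrow> 'b) \<Rightarrow> ('k, 'a) leib \<Rightarrow> ('k, 'b) leib \<Rightarrow> 'a set" where
  "hom_kernel f A B = {x \<in> lcarrier A. f x = lzero B}"

text \<open>Evaluation at the representative qrep X; only meaningful on cosets of the kernel of f.\<close>
definition quot_lift :: "('a \<Rightarrow> 'b) \<Rightarrow> 'a set \<Rightarrow> 'b" where
  "quot_lift f X = f (qrep X)"

locale leibniz_hom = A: leibniz_alg A + B: leibniz_alg B
  for A :: "('k::field, 'a) leib" and B :: "('k, 'b) leib" +
  fixes f assumes hom: "leib_hom f A B"
begin

lemma f_closed [simp]: "x \<in> lcarrier A \<Longrightarrow> f x \<in> lcarrier B"
  using hom by (simp add: leib_hom_def)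
lemma f_add [simp]: "x \<in> lcarrier A \<Longrightarrow> y \<in> lcarrier A \<Longrightarrow> f (ladd A x y) = ladd B (f x) (f y)"
  using hom by (simp add: leib_hom_def)
lemma f_smult [simp]: "x \<in> lcarrier A \<Longrightarrow> f (lsmult A c x) = lsmult B c (f x)"
  using hom by (simp add: leib_hom_def)
lemma f_br [simp]: "x \<in> lcarrier A \<Longrightarrow> y \<in> lcarrier A \<Longrightarrow> f (lbr A x y) = lbr B (f x) (f y)"
  using hom by (simp add: leib_hom_def)
lemma f_lie [simp]: "x \<in> lcarrier A \<Longrightarrow> y \<in> lcarrier A \<Longrightarrow> f (lie A x y) = lie B (f x) (f y)"
  by (simp add: lie_def)
lemma f_neg [simp]: "x \<in> lcarrier A \<Longrightarrow> f (lneg A x) = lneg B (f x)"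
  by (simp add: lneg_def)
lemma f_zero [simp]: "f (lzero A) = lzero B"
  using f_smult[of "lzero A" 0] by simp

lemma f_iter_lie: "(\<forall>i\<le>k. x i \<in> lcarrier A) \<Longrightarrow> f (iter_lie A x k) = iter_lie B (f \<circ> x) k"
  by (induction k) (simp_all add: A.iter_lie_closed)

lemma ideal_hom_kernel: "ideal A (hom_kernel f A B)"
  unfolding ideal_def hom_kernel_def by auto

sublocale ker: leibniz_quot A "hom_kernel f A B"
  by unfold_locales (rule ideal_hom_kernel)

lemma coset_kernel_eq_iff:
  "a \<in> lcarrier A \<Longrightarrow> b \<in> lcarrier A \<Longrightarrow>
    coset A a (hom_kernel f A B) = coset A b (hom_kernel f A B) \<longleftrightarrow> f a = f b"
  by (simp add: ker.coset_eq_iff) (simp add: hom_kernel_def A.lsub_eq B.add_neg_eq_zero_iff)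

lemma quot_lift_coset [simp]:
  assumes a: "a \<in> lcarrier A"
  shows "quot_lift f (coset A a (hom_kernel f A B)) = f a"
proof -
  obtain i where "i \<in> hom_kernel f A B" "qrep (coset A a (hom_kernel f A B)) = ladd A a i"
    using ker.qrep_coset[OF a] by metis
  then show ?thesis using a by (simp add: quot_lift_def hom_kernel_def)
qed

end

locale leibniz_surj_hom = leibniz_hom +
  assumes surj: "f ` lcarrier A = lcarrier B"
begin

lemma quot_lift_iso: "leib_iso (quot_lift f) (quot A (hom_kernel f A B)) B"
proof -
  have "leib_hom (quot_lift f) (quot A (hom_kernel f A B)) B"
    unfolding leib_hom_def ker.coset_image[symmetric] by auto
  moreover have "inj_on (quot_lift f) (lcarrier (quot A (hom_kernel f A B)))"
    unfolding ker.coset_image[symmetric] by (intro inj_onI) (force simp: coset_kernel_eq_iff)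
  moreover have "quot_lift f ` lcarrier (quot A (hom_kernel f A B)) = lcarrier B"
    unfolding ker.coset_image[symmetric] using surj by (auto simp: image_image)
  ultimately show ?thesis by (simp add: leib_iso_def bij_betw_def)
qed

lemma ideal_image:
  assumes J: "ideal A J"
  shows "ideal B (f ` J)"
proof -
  have Jc: "J \<subseteq> lcarrier A" and J0: "lzero A \<in> J"
    and Jadd: "\<And>x y. x \<in> J \<Longrightarrow> y \<in> J \<Longrightarrow> ladd A x y \<in> J"
    and Jsmult: "\<And>c x. x \<in> J \<Longrightarrow> lsmult A c x \<in> J"
    and Jbr: "\<And>x y. x \<in> J \<Longrightarrow> y \<in> lcarrier A \<Longrightarrow> lbr A x y \<in> J \<and> lbr A y x \<in> J"
    using J by (auto simp: ideal_def)
  have "lbr B (f x) y \<in> f ` J \<and> lbr B y (f x) \<in> f ` J"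
    if x: "x \<in> J" and y: "y \<in> lcarrier B" for x y
  proof -
    obtain a where "a \<in> lcarrier A" "y = f a" using y surj by blast
    then have "lbr B (f x) y = f (lbr A x a)" "lbr B y (f x) = f (lbr A a x)"
      using x Jc by auto
    then show ?thesis using x \<open>a \<in> lcarrier A\<close> Jbr by blast
  qed
  moreover have "ladd B (f x) (f y) \<in> f ` J" if "x \<in> J" "y \<in> J" for x y
    using that Jc Jadd f_add[of x y, symmetric] by blast
  moreover have "lsmult B c (f x) \<in> f ` J" if "x \<in> J" for c x
    using that Jc Jsmult f_smult[of x c, symmetric] by blast
  moreover have "f ` J \<subseteq> lcarrier B" "lzero B \<in> f ` J"
    using Jc J0 f_zero by (auto intro: image_eqI[of _ f "lzero A"])
  ultimately show ?thesis unfolding ideal_def by blast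
qed

lemma ideal_preimage: "ideal B J \<Longrightarrow> ideal A {x \<in> lcarrier A. f x \<in> J}"
  unfolding ideal_def by auto

lemma image_gen_ideal:
  assumes S: "S \<subseteq> lcarrier A"
  shows "f ` gen_ideal A S = gen_ideal B (f ` S)"
proof
  have "f ` S \<subseteq> lcarrier B" using S by auto
  then have "gen_ideal A S \<subseteq> {x \<in> lcarrier A. f x \<in> gen_ideal B (f ` S)}"
    using S gen_ideal_superset[of "f ` S" B]
    by (intro gen_ideal_least ideal_preimage B.ideal_gen_ideal) auto
  then show "f ` gen_ideal A S \<subseteq> gen_ideal B (f ` S)" by auto
  show "gen_ideal B (f ` S) \<subseteq> f ` gen_ideal A S"
    using gen_ideal_superset[of S A]
    by (intro gen_ideal_least ideal_image A.ideal_gen_ideal[OF S]) auto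
qed

lemma image_lie_generators:
  assumes M: "M \<subseteq> lcarrier A"
  shows "f ` {lie A m x | m x. m \<in> M \<and> x \<in> lcarrier A} =
    {lie B m y | m y. m \<in> f ` M \<and> y \<in> lcarrier B}"
proof -
  have "lie B (f m) y \<in> f ` {lie A m x | m x. m \<in> M \<and> x \<in> lcarrier A}"
    if m: "m \<in> M" and y: "y \<in> lcarrier B" for m y
  proof -
    obtain x where "x \<in> lcarrier A" "y = f x" using y surj by blast
    then show ?thesis using m M by force
  qed
  moreover have "f (lie A m x) \<in> {lie B m y | m y. m \<in> f ` M \<and> y \<in> lcarrier B}"
    if "m \<in> M" "x \<in> lcarrier A" for m x
    using that M by (intro CollectI exI[of _ "f m"] exI[of _ "f x"]) auto
  ultimately show ?thesis by blast
qed

lemma image_gammaL: "f ` gammaL A k = gammaL B k"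
proof (induction k)
  case (Suc k)
  show ?case
  proof (cases k)
    case (Suc i)
    have "{lie A m x | m x. m \<in> gammaL A k \<and> x \<in> lcarrier A} \<subseteq> lcarrier A"
      using A.gammaL_closed by auto
    then show ?thesis
      unfolding Suc gammaL.simps(3) lie_comm_def
      by (simp add: image_gen_ideal image_lie_generators A.gammaL_closed Suc.IH[unfolded Suc])
  qed (simp add: surj)
qed (simp add: surj)

end

lemma (in leibniz_quot) leibniz_quot: "leibniz (quot L I)"
  by (rule leibniz_surj_hom_image[OF leibniz hom_coset coset_image]) (simp add: quot_def)

lemma leibniz_subalg:
  assumes L: "leibniz L" and S: "S \<subseteq> lcarrier L" "lzero L \<in> S"
    and add: "\<And>x y. x \<in> S \<Longrightarrow> y \<in> S \<Longrightarrow> ladd L x y \<in> S"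
    and smult: "\<And>c x. x \<in> S \<Longrightarrow> lsmult L c x \<in> S"
    and br: "\<And>x y. x \<in> S \<Longrightarrow> y \<in> S \<Longrightarrow> lbr L x y \<in> S"
  shows "leibniz (subalg L S)"
proof -
  interpret leibniz_alg L by (rule leibniz_alg.intro, rule L)
  have c: "\<And>x. x \<in> S \<Longrightarrow> x \<in> lcarrier L" using S by blast
  show ?thesis
  proof (rule leibnizI[OF vecspaceI])
    show "\<exists>y\<in>lcarrier (subalg L S). ladd (subalg L S) x y = lzero (subalg L S)"
      if "x \<in> lcarrier (subalg L S)" for x
    proof -
      have "x \<in> S" "lneg L x \<in> S" using that smult by (simp_all add: subalg_def lneg_def)
      then show ?thesis using c by (intro bexI[of _ "lneg L x"]) (simp_all add: subalg_def)
    qed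
  qed (auto simp: subalg_def c S add smult br add_assoc add_commute add_left_commute lneg_def
      smult_add_right smult_add_left smult_smult br_add_left br_add_right br_smult_left
      br_smult_right leibniz_identity[unfolded lneg_def])
qed

lemma (in leibniz_alg) leibniz_subalg_ideal: "ideal L I \<Longrightarrow> leibniz (subalg L I)"
  unfolding ideal_def by (intro leibniz_subalg[OF leibniz]) auto

lemma leib_iso_inv:
  assumes A: "leibniz A" and f: "leib_iso f A B"
  shows "leib_iso (inv_into (lcarrier A) f) B A"
proof -
  interpret leibniz_alg A by (rule leibniz_alg.intro, rule A)
  let ?g = "inv_into (lcarrier A) f"
  have bij: "bij_betw f (lcarrier A) (lcarrier B)" and h: "leib_hom f A B"
    using f by (simp_all add: leib_iso_def)
  have bij_g: "bij_betw ?g (lcarrier B) (lcarrier A)" using bij by (rule bij_betw_inv_into)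
  have g_closed: "\<And>y. y \<in> lcarrier B \<Longrightarrow> ?g y \<in> lcarrier A" using bij_g bij_betwE by blast
  have fg: "\<And>y. y \<in> lcarrier B \<Longrightarrow> f (?g y) = y" using bij by (meson bij_betw_inv_into_right)
  have gf: "\<And>x. x \<in> lcarrier A \<Longrightarrow> ?g (f x) = x" using bij by (meson bij_betw_inv_into_left)
  have "leib_hom ?g B A"
    unfolding leib_hom_def
  proof (intro conjI ballI allI)
    fix x y c assume x: "x \<in> lcarrier B" and y: "y \<in> lcarrier B"
    have "ladd B x y = f (ladd A (?g x) (?g y))" "lbr B x y = f (lbr A (?g x) (?g y))"
      using h g_closed fg x y by (simp_all add: leib_hom_def)
    then show "?g (ladd B x y) = ladd A (?g x) (?g y)" "?g (lbr B x y) = lbr A (?g x) (?g y)"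
      using gf g_closed x y by simp_all
  next
    fix x c assume x: "x \<in> lcarrier B"
    have "lsmult B c x = f (lsmult A c (?g x))"
      using h g_closed fg x by (simp add: leib_hom_def)
    then show "?g (lsmult B c x) = lsmult A c (?g x)"
      using gf g_closed x by simp
  qed (rule g_closed)
  then show ?thesis using bij_g by (simp add: leib_iso_def)
qed

section \<open>Lie-isoclinism\<close>

text \<open>Z_n^Lie is marginal for the n-fold symmetrised bracket. This is only established for
  algebras that are n-Lie-isoclinic to some algebra, where it follows from the injectivity of xi.\<close>
definition zeta_marginal :: "nat \<Rightarrow> ('k::field, 'a) leib \<Rightarrow> bool" where
  "zeta_marginal n L \<longleftrightarrow> (\<forall>x y. (\<forall>i\<le>n. x i \<in> lcarrier L \<and> y i \<in> lcarrier L \<and>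
      coset L (x i) (zetaL L n) = coset L (y i) (zetaL L n)) \<longrightarrow> iter_lie L x n = iter_lie L y n)"

lemma lie_isoclinism_iter_lie:
  assumes "lie_isoclinism n A B \<eta> \<xi>"
    and "\<forall>i\<le>n. x i \<in> lcarrier A \<and> y i \<in> lcarrier B \<and>
      \<eta> (coset A (x i) (zetaL A n)) = coset B (y i) (zetaL B n)"
  shows "\<xi> (iter_lie A x n) = iter_lie B y n"
  using assms unfolding lie_isoclinism_def by blast

lemma lie_isoclinism_lift:
  assumes iso: "lie_isoclinism n A B \<eta> \<xi>" and x: "\<forall>i\<le>n. x i \<in> lcarrier A"
  obtains y where "\<forall>i\<le>n. y i \<in> lcarrier B \<and> \<eta> (coset A (x i) (zetaL A n)) = coset B (y i) (zetaL B n)"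
proof -
  have "\<eta> (coset A (x i) (zetaL A n)) \<in> lcarrier (quot B (zetaL B n))" if "i \<le> n" for i
    using iso x that by (simp add: lie_isoclinism_def leib_iso_def leib_hom_def quot_def)
  then have "\<forall>i\<le>n. \<exists>w. w \<in> lcarrier B \<and> \<eta> (coset A (x i) (zetaL A n)) = coset B w (zetaL B n)"
    by (auto simp: quot_def)
  then show ?thesis using that by metis
qed

lemma lie_isoclinism_zeta_marginal:
  assumes A: "leibniz A" and iso: "lie_isoclinism n A B \<eta> \<xi>"
  shows "zeta_marginal n A"
  unfolding zeta_marginal_def
proof (intro allI impI)
  fix x x'
  assume xx': "\<forall>i\<le>n. x i \<in> lcarrier A \<and> x' i \<in> lcarrier A \<and>
    coset A (x i) (zetaL A n) = coset A (x' i) (zetaL A n)"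
  interpret leibniz_alg A by (rule leibniz_alg.intro, rule A)
  obtain y where y: "\<forall>i\<le>n. y i \<in> lcarrier B \<and> \<eta> (coset A (x i) (zetaL A n)) = coset B (y i) (zetaL B n)"
    using lie_isoclinism_lift[OF iso] xx' by metis
  have "\<xi> (iter_lie A x n) = iter_lie B y n" "\<xi> (iter_lie A x' n) = iter_lie B y n"
    using y xx' by (auto intro!: lie_isoclinism_iter_lie[OF iso])
  moreover have "inj_on \<xi> (gammaL A (Suc n))"
    using iso by (simp add: lie_isoclinism_def leib_iso_def bij_betw_def subalg_def)
  moreover have "iter_lie A x n \<in> gammaL A (Suc n)" "iter_lie A x' n \<in> gammaL A (Suc n)"
    using iter_lie_mem_gammaL xx' by auto
  ultimately show "iter_lie A x n = iter_lie A x' n"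
    by (metis inj_onD)
qed

lemma lie_isoclinic_zeta_marginal:
  "leibniz A \<Longrightarrow> lie_isoclinic n A B \<Longrightarrow> zeta_marginal n A"
  unfolding lie_isoclinic_def using lie_isoclinism_zeta_marginal by blast

lemma lie_isoclinism_inv:
  assumes A: "leibniz A" and iso: "lie_isoclinism n A B \<eta> \<xi>"
  shows "lie_isoclinism n B A (inv_into (lcarrier (quot A (zetaL A n))) \<eta>) (inv_into (gammaL A (Suc n)) \<xi>)"
proof -
  interpret A: leibniz_alg A by (rule leibniz_alg.intro, rule A)
  interpret QA: leibniz_quot A "zetaL A n" by unfold_locales (rule A.ideal_zetaL)
  define \<eta>' where "\<eta>' = inv_into (lcarrier (quot A (zetaL A n))) \<eta>"
  define \<xi>' where "\<xi>' = inv_into (gammaL A (Suc n)) \<xi>"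
  have e: "leib_iso \<eta> (quot A (zetaL A n)) (quot B (zetaL B n))"
    and x: "leib_iso \<xi> (subalg A (gammaL A (Suc n))) (subalg B (gammaL B (Suc n)))"
    using iso unfolding lie_isoclinism_def by blast+
  then have bij_e: "bij_betw \<eta> (lcarrier (quot A (zetaL A n))) (lcarrier (quot B (zetaL B n)))"
    and bij_x: "bij_betw \<xi> (gammaL A (Suc n)) (gammaL B (Suc n))"
    by (simp_all add: leib_iso_def subalg_def)
  have "leib_iso \<eta>' (quot B (zetaL B n)) (quot A (zetaL A n))"
    unfolding \<eta>'_def by (rule leib_iso_inv[OF QA.leibniz_quot e])
  moreover have "leib_iso \<xi>' (subalg B (gammaL B (Suc n))) (subalg A (gammaL A (Suc n)))"
    using leib_iso_inv[OF A.leibniz_subalg_ideal[OF A.ideal_gammaL] x]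
    by (simp add: \<xi>'_def subalg_def)
  moreover have "\<xi>' (iter_lie B y n) = iter_lie A x n"
    if yx: "\<forall>i\<le>n. y i \<in> lcarrier B \<and> x i \<in> lcarrier A \<and>
      \<eta>' (coset B (y i) (zetaL B n)) = coset A (x i) (zetaL A n)" for y x
  proof -
    have "\<eta> (coset A (x i) (zetaL A n)) = coset B (y i) (zetaL B n)" if "i \<le> n" for i
    proof -
      have "coset B (y i) (zetaL B n) \<in> lcarrier (quot B (zetaL B n))"
        using yx that by (simp add: quot_def)
      then have "\<eta> (\<eta>' (coset B (y i) (zetaL B n))) = coset B (y i) (zetaL B n)"
        using bij_betw_inv_into_right[OF bij_e] by (simp add: \<eta>'_def)
      then show ?thesis using yx that by simp
    qed
    then have "\<xi> (iter_lie A x n) = iter_lie B y n" using lie_isoclinism_iter_lie[OF iso] yx by blast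
    moreover have "iter_lie A x n \<in> gammaL A (Suc n)" using A.iter_lie_mem_gammaL yx by auto
    ultimately show ?thesis
      using bij_betw_inv_into_left[OF bij_x, of "iter_lie A x n"] by (simp add: \<xi>'_def)
  qed
  ultimately show ?thesis unfolding lie_isoclinism_def \<eta>'_def \<xi>'_def by blast
qed

lemma lie_isoclinic_sym: "leibniz A \<Longrightarrow> lie_isoclinic n A B \<Longrightarrow> lie_isoclinic n B A"
  unfolding lie_isoclinic_def using lie_isoclinism_inv by blast

lemma lie_isoclinic_trans:
  assumes AB: "lie_isoclinic n A B" and BC: "lie_isoclinic n B C"
  shows "lie_isoclinic n A C"
proof -
  obtain \<eta>1 \<xi>1 \<eta>2 \<xi>2 where iso1: "lie_isoclinism n A B \<eta>1 \<xi>1" and iso2: "lie_isoclinism n B C \<eta>2 \<xi>2"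
    using AB BC by (auto simp: lie_isoclinic_def)
  have "(\<xi>2 \<circ> \<xi>1) (iter_lie A x n) = iter_lie C z n"
    if xz: "\<forall>i\<le>n. x i \<in> lcarrier A \<and> z i \<in> lcarrier C \<and>
      (\<eta>2 \<circ> \<eta>1) (coset A (x i) (zetaL A n)) = coset C (z i) (zetaL C n)" for x z
  proof -
    obtain y where y: "\<forall>i\<le>n. y i \<in> lcarrier B \<and> \<eta>1 (coset A (x i) (zetaL A n)) = coset B (y i) (zetaL B n)"
      using lie_isoclinism_lift[OF iso1] xz by metis
    then have "\<xi>1 (iter_lie A x n) = iter_lie B y n" using lie_isoclinism_iter_lie[OF iso1] xz by blast
    moreover have "\<xi>2 (iter_lie B y n) = iter_lie C z n" using lie_isoclinism_iter_lie[OF iso2] y xz by auto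
    ultimately show ?thesis by simp
  qed
  moreover have "leib_iso (\<eta>2 \<circ> \<eta>1) (quot A (zetaL A n)) (quot C (zetaL C n))"
    and "leib_iso (\<xi>2 \<circ> \<xi>1) (subalg A (gammaL A (Suc n))) (subalg C (gammaL C (Suc n)))"
    using iso1 iso2 unfolding lie_isoclinism_def leib_iso_def
    by (auto intro: leib_hom_comp bij_betw_trans)
  ultimately have "lie_isoclinism n A C (\<eta>2 \<circ> \<eta>1) (\<xi>2 \<circ> \<xi>1)"
    unfolding lie_isoclinism_def by blast
  then show ?thesis unfolding lie_isoclinic_def by blast
qed

lemma (in leibniz_surj_hom) quot_zetaL_iso:
  assumes zeta: "\<And>x. x \<in> lcarrier A \<Longrightarrow> f x \<in> zetaL B n \<longleftrightarrow> x \<in> zetaL A n"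
  obtains \<eta> where "leib_iso \<eta> (quot A (zetaL A n)) (quot B (zetaL B n))"
    and "\<And>a. a \<in> lcarrier A \<Longrightarrow> \<eta> (coset A a (zetaL A n)) = coset B (f a) (zetaL B n)"
proof -
  interpret QB: leibniz_quot B "zetaL B n" by unfold_locales (rule B.ideal_zetaL)
  define g where "g = (\<lambda>a. coset B (f a) (zetaL B n))"
  interpret G: leibniz_surj_hom A "quot B (zetaL B n)" g
  proof unfold_locales
    show "leibniz (quot B (zetaL B n))" by (rule QB.leibniz_quot)
    show "leib_hom g A (quot B (zetaL B n))"
      using leib_hom_comp[OF hom QB.hom_coset] by (simp add: g_def comp_def)
    show "g ` lcarrier A = lcarrier (quot B (zetaL B n))"
      unfolding g_def QB.coset_image[symmetric] surj[symmetric] by (rule image_image[symmetric])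
  qed
  have ker: "hom_kernel g A (quot B (zetaL B n)) = zetaL A n"
  proof (rule set_eqI)
    fix x
    show "x \<in> hom_kernel g A (quot B (zetaL B n)) \<longleftrightarrow> x \<in> zetaL A n"
      using zeta[of x] A.zetaL_closed[of n] QB.coset_eq_zero_iff[of "f x"]
      by (auto simp: hom_kernel_def g_def quot_def)
  qed
  show ?thesis
  proof
    show "leib_iso (quot_lift g) (quot A (zetaL A n)) (quot B (zetaL B n))"
      using G.quot_lift_iso by (simp add: ker)
    show "quot_lift g (coset A a (zetaL A n)) = coset B (f a) (zetaL B n)" if "a \<in> lcarrier A" for a
      using G.quot_lift_coset[OF that] unfolding ker by (simp add: g_def)
  qed
qed

lemma (in leibniz_surj_hom) lie_isoclinic_surj_hom:
  assumes zeta: "\<And>x. x \<in> lcarrier A \<Longrightarrow> f x \<in> zetaL B n \<longleftrightarrow> x \<in> zetaL A n"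
    and inj: "inj_on f (gammaL A (Suc n))"
    and marginal: "zeta_marginal n B"
  shows "lie_isoclinic n A B"
proof -
  obtain \<eta> where \<eta>: "leib_iso \<eta> (quot A (zetaL A n)) (quot B (zetaL B n))"
    and \<eta>_coset: "\<And>a. a \<in> lcarrier A \<Longrightarrow> \<eta> (coset A a (zetaL A n)) = coset B (f a) (zetaL B n)"
    using quot_zetaL_iso[OF zeta] by blast
  have "leib_iso f (subalg A (gammaL A (Suc n))) (subalg B (gammaL B (Suc n)))"
    using inj image_gammaL A.gammaL_closed[THEN subsetD]
    by (auto simp: leib_iso_def leib_hom_def subalg_def bij_betw_def)
  moreover have "f (iter_lie A x n) = iter_lie B y n"
    if xy: "\<forall>i\<le>n. x i \<in> lcarrier A \<and> y i \<in> lcarrier B \<and>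
      \<eta> (coset A (x i) (zetaL A n)) = coset B (y i) (zetaL B n)" for x y
  proof -
    have "\<forall>i\<le>n. f (x i) \<in> lcarrier B \<and> y i \<in> lcarrier B \<and>
      coset B (f (x i)) (zetaL B n) = coset B (y i) (zetaL B n)"
      using xy \<eta>_coset by (metis f_closed)
    then show ?thesis
      using marginal xy by (simp add: zeta_marginal_def f_iter_lie)
  qed
  ultimately show ?thesis using \<eta> unfolding lie_isoclinic_def lie_isoclinism_def by blast
qed

lemma (in leibniz_hom) f_mem_zetaL_iff:
  assumes bij: "bij_betw f (lcarrier A) (lcarrier B)" and x: "x \<in> lcarrier A"
  shows "f x \<in> zetaL B k \<longleftrightarrow> x \<in> zetaL A k"
  using x
proof (induction k arbitrary: x)
  case 0
  then show ?case using bij A.zero_closed unfolding bij_betw_def by (metis f_zero inj_onD singleton_iff zetaL.simps(1))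
next
  case (Suc k)
  have "lie B (f x) (f y) \<in> zetaL B k \<longleftrightarrow> lie A x y \<in> zetaL A k" if "y \<in> lcarrier A" for y
    using Suc that by (simp flip: f_lie)
  moreover have "lcarrier B = f ` lcarrier A" using bij by (simp add: bij_betw_def)
  ultimately show ?case using Suc.prems by auto
qed

lemma lie_isoclinic_of_iso:
  assumes A: "leibniz A" and B: "leibniz B" and f: "leib_iso f A B"
    and marginal: "zeta_marginal n B"
  shows "lie_isoclinic n A B"
proof -
  have bij: "bij_betw f (lcarrier A) (lcarrier B)" using f by (simp add: leib_iso_def)
  interpret leibniz_surj_hom A B f
    using A B f by unfold_locales (simp_all add: leib_iso_def bij_betw_def)
  show ?thesis
  proof (rule lie_isoclinic_surj_hom)
    show "inj_on f (gammaL A (Suc n))"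
      using bij A.gammaL_closed by (meson bij_betw_def inj_on_subset)
  qed (simp_all add: f_mem_zetaL_iff[OF bij] marginal)
qed

lemma (in leibniz_alg) gammaL_quot_gammaL:
  "gammaL (quot L (gammaL L k)) k = {lzero (quot L (gammaL L k))}"
proof -
  interpret Q: leibniz_quot L "gammaL L k" by unfold_locales (rule ideal_gammaL)
  interpret P: leibniz_surj_hom L "quot L (gammaL L k)" "\<lambda>a. coset L a (gammaL L k)"
    by unfold_locales (simp_all add: leibniz Q.leibniz_quot Q.hom_coset Q.coset_image)
  have "coset L a (gammaL L k) = lzero (quot L (gammaL L k))" if "a \<in> gammaL L k" for a
  proof -
    have "a \<in> lcarrier L" using that gammaL_closed by blast
    show ?thesis unfolding Q.quot_zero Q.coset_eq_zero_iff[OF \<open>a \<in> lcarrier L\<close>] by (fact that)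
  qed
  then have "(\<lambda>a. coset L a (gammaL L k)) ` gammaL L k = (\<lambda>a. lzero (quot L (gammaL L k))) ` gammaL L k"
    by (rule image_cong[OF refl])
  also have "\<dots> = {lzero (quot L (gammaL L k))}"
    using ideal_gammaL[of k] by (intro image_constant[of "lzero L"]) (simp add: ideal_def)
  finally show ?thesis by (simp add: P.image_gammaL)
qed

section \<open>Direct sums\<close>

lemma dsum_simps [simp]:
  "lcarrier (dsum A B) = lcarrier A \<times> lcarrier B"
  "ladd (dsum A B) (a, b) (a', b') = (ladd A a a', ladd B b b')"
  "lzero (dsum A B) = (lzero A, lzero B)"
  "lsmult (dsum A B) c (a, b) = (lsmult A c a, lsmult B c b)"
  "lbr (dsum A B) (a, b) (a', b') = (lbr A a a', lbr B b b')"
  "lie (dsum A B) (a, b) (a', b') = (lie A a a', lie B b b')"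
  by (simp_all add: dsum_def lie_def)

lemma leibniz_dsum:
  assumes A: "leibniz A" and B: "leibniz B"
  shows "leibniz (dsum A B)"
proof -
  interpret A: leibniz_alg A by (rule leibniz_alg.intro, rule A)
  interpret B: leibniz_alg B by (rule leibniz_alg.intro, rule B)
  show ?thesis
  proof (rule leibnizI[OF vecspaceI])
    show "\<exists>y\<in>lcarrier (dsum A B). ladd (dsum A B) x y = lzero (dsum A B)"
      if "x \<in> lcarrier (dsum A B)" for x
      using that by (intro bexI[of _ "(lneg A (fst x), lneg B (snd x))"]) auto
  qed (auto simp: lneg_def A.add_assoc B.add_assoc A.add_commute B.add_commute
      A.add_left_commute B.add_left_commute
      A.smult_add_right B.smult_add_right A.smult_add_left B.smult_add_left A.smult_smult B.smult_smult
      A.br_add_left B.br_add_left A.br_add_right B.br_add_right A.br_smult_left B.br_smult_left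
      A.br_smult_right B.br_smult_right A.leibniz_identity[unfolded lneg_def]
      B.leibniz_identity[unfolded lneg_def])
qed

lemma zetaL_dsum:
  assumes A: "leibniz A" and B: "leibniz B"
  shows "zetaL (dsum A B) k = zetaL A k \<times> zetaL B k"
proof (induction k)
  case (Suc k)
  interpret A: leibniz_alg A by (rule leibniz_alg.intro, rule A)
  interpret B: leibniz_alg B by (rule leibniz_alg.intro, rule B)
  have "(a, b) \<in> zetaL (dsum A B) (Suc k) \<longleftrightarrow> (a, b) \<in> zetaL A (Suc k) \<times> zetaL B (Suc k)" for a b
  proof -
    have "(a, b) \<in> zetaL (dsum A B) (Suc k) \<longleftrightarrow> a \<in> lcarrier A \<and> b \<in> lcarrier B \<and>
        (\<forall>c\<in>lcarrier A. \<forall>d\<in>lcarrier B. lie A a c \<in> zetaL A k \<and> lie B b d \<in> zetaL B k)"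
      using Suc.IH by auto
    also have "\<dots> \<longleftrightarrow> (a, b) \<in> zetaL A (Suc k) \<times> zetaL B (Suc k)"
      by auto
    finally show ?thesis .
  qed
  then show ?case by (intro set_eqI) (metis prod.exhaust)
qed simp

lemma (in leibniz_alg) zetaL_eq_carrier:
  assumes nil: "gammaL L (Suc n) = {lzero L}"
  shows "zetaL L n = lcarrier L"
proof -
  have "gammaL L (Suc (n - m)) \<subseteq> zetaL L m" if "m \<le> n" for m
    using that
  proof (induction m)
    case (Suc m)
    have n_eq: "Suc (n - m) = Suc (Suc (n - Suc m))" using Suc.prems by simp
    show ?case
    proof
      fix u assume u: "u \<in> gammaL L (Suc (n - Suc m))"
      then have "lie L u y \<in> zetaL L m" if "y \<in> lcarrier L" for y
        using Suc that lie_mem_gammaL[OF u] n_eq by auto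
      then show "u \<in> zetaL L (Suc m)" using u gammaL_closed by auto
    qed
  qed (simp add: nil)
  then show ?thesis using zetaL_closed[of n] by force
qed

lemma lie_isoclinic_dsum_nilpotent:
  assumes A: "leibniz A" and N: "leibniz N" and nil: "gammaL N (Suc n) = {lzero N}"
    and marginal: "zeta_marginal n A"
  shows "lie_isoclinic n A (dsum A N)"
proof -
  interpret N: leibniz_alg N by (rule leibniz_alg.intro, rule N)
  have D: "leibniz (dsum A N)" by (rule leibniz_dsum[OF A N])
  interpret fst: leibniz_surj_hom "dsum A N" A fst
    by unfold_locales (auto simp: D A leib_hom_def image_iff intro: bexI[of _ "lzero N"])
  interpret snd: leibniz_surj_hom "dsum A N" N snd
    by unfold_locales (auto simp: D N leib_hom_def image_iff intro: bexI[of _ "lzero A"])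
  have "lie_isoclinic n (dsum A N) A"
  proof (rule fst.lie_isoclinic_surj_hom)
    show "fst p \<in> zetaL A n \<longleftrightarrow> p \<in> zetaL (dsum A N) n" if "p \<in> lcarrier (dsum A N)" for p
      using that by (auto simp: zetaL_dsum[OF A N] N.zetaL_eq_carrier[OF nil])
    have "snd ` gammaL (dsum A N) (Suc n) = {lzero N}" by (simp add: snd.image_gammaL nil)
    then have "snd p = lzero N" if "p \<in> gammaL (dsum A N) (Suc n)" for p
      using that by blast
    then show "inj_on fst (gammaL (dsum A N) (Suc n))"
      by (intro inj_onI) (simp add: prod_eq_iff)
  qed (rule marginal)
  then show ?thesis by (rule lie_isoclinic_sym[OF D])
qed

section \<open>The graph of an isoclinism\<close>

lemma leibniz_subalg_equalizer:
  assumes A: "leibniz A" and B: "leibniz B" and h1: "leib_hom h1 A B" and h2: "leib_hom h2 A B"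
  shows "leibniz (subalg A {x \<in> lcarrier A. h1 x = h2 x})"
proof -
  interpret h1: leibniz_hom A B h1 by unfold_locales (fact A B h1)+
  interpret h2: leibniz_hom A B h2 by unfold_locales (fact h2)
  show ?thesis by (rule leibniz_subalg[OF A]) auto
qed

locale lie_isoclinism_graph = G1: leibniz_alg g1 + G2: leibniz_alg g2
  for g1 :: "('k::field, 'a) leib" and g2 :: "('k, 'b) leib" +
  fixes n \<eta> \<xi> assumes iso: "lie_isoclinism n g1 g2 \<eta> \<xi>"
begin

sublocale Q1: leibniz_quot g1 "zetaL g1 n" by unfold_locales (rule G1.ideal_zetaL)
sublocale Q2: leibniz_quot g2 "zetaL g2 n" by unfold_locales (rule G2.ideal_zetaL)

sublocale E: leibniz_hom "quot g1 (zetaL g1 n)" "quot g2 (zetaL g2 n)" \<eta>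
  using iso by unfold_locales (simp_all add: Q1.leibniz_quot Q2.leibniz_quot lie_isoclinism_def leib_iso_def)

lemma eta_bij: "bij_betw \<eta> (lcarrier (quot g1 (zetaL g1 n))) (lcarrier (quot g2 (zetaL g2 n)))"
  using iso by (simp add: lie_isoclinism_def leib_iso_def)

abbreviation K where "K \<equiv> Kalg n g1 g2 \<eta>"

lemma Kalg_eq_equalizer:
  "K = subalg (dsum g1 g2) {p \<in> lcarrier (dsum g1 g2).
     \<eta> (coset g1 (fst p) (zetaL g1 n)) = coset g2 (snd p) (zetaL g2 n)}"
  unfolding Kalg_def Kset_def by (rule arg_cong[where f = "subalg (dsum g1 g2)"]) auto

lemma Kalg_simps [simp]:
  "(a, b) \<in> lcarrier K \<longleftrightarrow> a \<in> lcarrier g1 \<and> b \<in> lcarrier g2 \<and>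
     \<eta> (coset g1 a (zetaL g1 n)) = coset g2 b (zetaL g2 n)"
  "ladd K = ladd (dsum g1 g2)" "lzero K = lzero (dsum g1 g2)"
  "lsmult K = lsmult (dsum g1 g2)" "lbr K = lbr (dsum g1 g2)"
  by (simp_all add: Kalg_def Kset_def subalg_def)

lemma eta_zero: "\<eta> (coset g1 (lzero g1) (zetaL g1 n)) = coset g2 (lzero g2) (zetaL g2 n)"
  using E.f_zero by (simp add: Q1.quot_zero Q2.quot_zero)

lemma leibniz_Kalg: "leibniz K"
proof -
  have "leib_hom (\<lambda>p. \<eta> (coset g1 (fst p) (zetaL g1 n))) (dsum g1 g2) (quot g2 (zetaL g2 n))"
    using leib_hom_comp[OF leib_hom_comp[OF _ Q1.hom_coset] E.hom, of fst "dsum g1 g2"]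
    by (auto simp: leib_hom_def comp_def)
  moreover have "leib_hom (\<lambda>p. coset g2 (snd p) (zetaL g2 n)) (dsum g1 g2) (quot g2 (zetaL g2 n))"
    using leib_hom_comp[OF _ Q2.hom_coset, of snd "dsum g1 g2"]
    by (auto simp: leib_hom_def comp_def)
  ultimately show ?thesis
    unfolding Kalg_eq_equalizer
    by (rule leibniz_subalg_equalizer[OF leibniz_dsum[OF G1.leibniz G2.leibniz] Q2.leibniz_quot])
qed

sublocale KL: leibniz_alg K by unfold_locales (rule leibniz_Kalg)

lemma leib_hom_Kalg_fst: "leib_hom fst K g1"
  by (auto simp: leib_hom_def Kalg_def Kset_def subalg_def)

lemma leib_hom_Kalg_snd: "leib_hom snd K g2"
  by (auto simp: leib_hom_def Kalg_def Kset_def subalg_def)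

sublocale fst: leibniz_surj_hom K g1 fst
proof unfold_locales
  show "leib_hom fst K g1" by (rule leib_hom_Kalg_fst)
  show "fst ` lcarrier K = lcarrier g1"
  proof
    show "lcarrier g1 \<subseteq> fst ` lcarrier K"
    proof
      fix a assume a: "a \<in> lcarrier g1"
      then have "\<eta> (coset g1 a (zetaL g1 n)) \<in> lcarrier (quot g2 (zetaL g2 n))" by simp
      then obtain b where "b \<in> lcarrier g2" "\<eta> (coset g1 a (zetaL g1 n)) = coset g2 b (zetaL g2 n)"
        by (auto simp: quot_def)
      then show "a \<in> fst ` lcarrier K" using a by (force intro: image_eqI[of _ fst "(a, b)"])
    qed
  qed (auto simp: Kalg_def Kset_def subalg_def)
qed

sublocale snd: leibniz_surj_hom K g2 snd
proof unfold_locales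
  show "leib_hom snd K g2" by (rule leib_hom_Kalg_snd)
  show "snd ` lcarrier K = lcarrier g2"
  proof
    show "lcarrier g2 \<subseteq> snd ` lcarrier K"
    proof
      fix b assume b: "b \<in> lcarrier g2"
      then have "coset g2 b (zetaL g2 n) \<in> \<eta> ` lcarrier (quot g1 (zetaL g1 n))"
        using eta_bij by (simp add: bij_betw_def)
      then obtain a where "a \<in> lcarrier g1" "\<eta> (coset g1 a (zetaL g1 n)) = coset g2 b (zetaL g2 n)"
        by (auto simp: quot_def)
      then show "b \<in> snd ` lcarrier K" using b by (force intro: image_eqI[of _ snd "(a, b)"])
    qed
  qed (auto simp: Kalg_def Kset_def subalg_def)
qed

lemma hom_kernel_fst: "hom_kernel fst K g1 = Zsnd n g1 g2"
proof -
  have "(lzero g1, b) \<in> lcarrier K \<longleftrightarrow> b \<in> lcarrier g2 \<and> coset g2 b (zetaL g2 n) = coset g2 (lzero g2) (zetaL g2 n)" for b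
    by (auto simp: eta_zero)
  also have "\<dots> b \<longleftrightarrow> b \<in> zetaL g2 n" for b
    using Q2.coset_eq_zero_iff[of b] G2.zetaL_closed[of n] by auto
  finally have "(lzero g1, b) \<in> lcarrier K \<longleftrightarrow> b \<in> zetaL g2 n" for b .
  then show ?thesis
    unfolding hom_kernel_def Zsnd_def by (auto simp del: Kalg_simps)
qed

lemma hom_kernel_snd: "hom_kernel snd K g2 = Zfst n g1 g2"
proof -
  have inj: "inj_on \<eta> (lcarrier (quot g1 (zetaL g1 n)))"
    using eta_bij by (simp add: bij_betw_def)
  have "(a, lzero g2) \<in> lcarrier K \<longleftrightarrow>
      a \<in> lcarrier g1 \<and> \<eta> (coset g1 a (zetaL g1 n)) = \<eta> (coset g1 (lzero g1) (zetaL g1 n))" for a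
    by (simp add: eta_zero)
  also have "\<dots> a \<longleftrightarrow> a \<in> lcarrier g1 \<and> a \<in> zetaL g1 n" for a
    using inj_on_eq_iff[OF inj, of "coset g1 a (zetaL g1 n)" "coset g1 (lzero g1) (zetaL g1 n)"]
      Q1.coset_eq_zero_iff[of a] by (simp cong: conj_cong)
  also have "\<dots> a \<longleftrightarrow> a \<in> zetaL g1 n" for a
    using G1.zetaL_closed[of n] by blast
  finally have "(a, lzero g2) \<in> lcarrier K \<longleftrightarrow> a \<in> zetaL g1 n" for a .
  then show ?thesis
    unfolding hom_kernel_def Zfst_def by (auto simp del: Kalg_simps)
qed

lemma leibniz_quot_Zsnd: "leibniz (quot K (Zsnd n g1 g2))"
  using fst.ker.leibniz_quot by (simp only: hom_kernel_fst)

lemma leibniz_quot_Zfst: "leibniz (quot K (Zfst n g1 g2))"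
  using snd.ker.leibniz_quot by (simp only: hom_kernel_snd)

lemma lie_isoclinic_quot_Zsnd: "lie_isoclinic n (quot K (Zsnd n g1 g2)) g1"
proof (rule lie_isoclinic_of_iso[OF leibniz_quot_Zsnd G1.leibniz])
  show "leib_iso (quot_lift fst) (quot K (Zsnd n g1 g2)) g1"
    using fst.quot_lift_iso by (simp only: hom_kernel_fst)
  show "zeta_marginal n g1" by (rule lie_isoclinism_zeta_marginal[OF G1.leibniz iso])
qed

lemma lie_isoclinic_quot_Zfst: "lie_isoclinic n (quot K (Zfst n g1 g2)) g2"
proof (rule lie_isoclinic_of_iso[OF leibniz_quot_Zfst G2.leibniz])
  show "leib_iso (quot_lift snd) (quot K (Zfst n g1 g2)) g2"
    using snd.quot_lift_iso by (simp only: hom_kernel_snd)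
  have "lie_isoclinic n g2 g1"
    using iso by (intro lie_isoclinic_sym[OF G1.leibniz]) (auto simp: lie_isoclinic_def)
  then show "zeta_marginal n g2" by (rule lie_isoclinic_zeta_marginal[OF G2.leibniz])
qed

lemma lie_isoclinic_dsum_quot_gammaL:
  assumes L: "leibniz L" and LM: "lie_isoclinic n L M"
  shows "lie_isoclinic n L (dsum L (quot K (gammaL K (Suc n))))"
proof -
  interpret N: leibniz_quot K "gammaL K (Suc n)" by unfold_locales (rule KL.ideal_gammaL)
  show ?thesis
    using L N.leibniz_quot KL.gammaL_quot_gammaL lie_isoclinic_zeta_marginal[OF L LM]
    by (rule lie_isoclinic_dsum_nilpotent)
qed

end

theorem mainTheorem8:
  fixes g1 :: "('k::field, 'a) leib" and g2 :: "('k, 'b) leib"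
    and n :: nat and \<eta> :: "'a set \<Rightarrow> 'b set" and \<xi> :: "'a \<Rightarrow> 'b"
  assumes half: "(2::'k) \<noteq> 0"
    and L1: "leibniz g1" and L2: "leibniz g2"
    and n1: "n \<ge> 1"
    and iso: "lie_isoclinism n g1 g2 \<eta> \<xi>"
    and c1: "lie_comm g1 (zetaL g1 (n - 1)) (lcarrier g1) \<subseteq> gammaL g1 (Suc n)"
    and c2: "lie_comm g2 (zetaL g2 (n - 1)) (lcarrier g2) \<subseteq> gammaL g2 (Suc n)"
  shows "lie_isoclinic n
           (quot (Kalg n g1 g2 \<eta>) (Zsnd n g1 g2))
           (dsum (quot (Kalg n g1 g2 \<eta>) (Zfst n g1 g2))
                 (quot (Kalg n g1 g2 \<eta>) (gammaL (Kalg n g1 g2 \<eta>) (Suc n))))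
       \<and> lie_isoclinic n
           (quot (Kalg n g1 g2 \<eta>) (Zfst n g1 g2))
           (dsum (quot (Kalg n g1 g2 \<eta>) (Zsnd n g1 g2))
                 (quot (Kalg n g1 g2 \<eta>) (gammaL (Kalg n g1 g2 \<eta>) (Suc n))))"
proof -
  interpret lie_isoclinism_graph g1 g2 n \<eta> \<xi>
    by (intro lie_isoclinism_graph.intro leibniz_alg.intro lie_isoclinism_graph_axioms.intro L1 L2 iso)
  let ?P = "quot K (Zsnd n g1 g2)" and ?Q = "quot K (Zfst n g1 g2)"
  have "lie_isoclinic n g1 g2" using iso by (auto simp: lie_isoclinic_def)
  then have PQ: "lie_isoclinic n ?P ?Q"
    using lie_isoclinic_quot_Zsnd lie_isoclinic_sym[OF leibniz_quot_Zfst lie_isoclinic_quot_Zfst]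
    by (blast intro: lie_isoclinic_trans)
  have QP: "lie_isoclinic n ?Q ?P" by (rule lie_isoclinic_sym[OF leibniz_quot_Zsnd PQ])
  show ?thesis
    using lie_isoclinic_dsum_quot_gammaL[OF leibniz_quot_Zfst QP]
      lie_isoclinic_dsum_quot_gammaL[OF leibniz_quot_Zsnd PQ] PQ QP
    by (blast intro: lie_isoclinic_trans)
qed

end
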